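(* Let $(a_n)_{n\in\mathbb{N}}$ be a strictly increasing sequence of positive integers which is quasi-arithmetic of degree $d$ for some positive integer $d$. Then there is no real number $\alpha$ such that the sequence $(\{a_n\alpha\})_{n\in\mathbb{N}}$ has Poissonian pair correlations.
   Context: A $d$-dimensional arithmetic progression of size at most $S$ is a set of the form $\{h + \sum_{j=1}^d r_j k_j : r_j \in \mathbb{Z},\ 0 \leq r_j < s_j\}$ with $h, k_1,\ldots,k_d \in \mathbb{Z}$, $s_1,\ldots,s_d$ positive integers and $s_1 s_2\cdots s_d \leq S$. A strictly increasing sequence $(a_n)$ of positive integers is called quasi-arithmetic of degree $d$ if there exist constants $C, K > 0$ and a strictly increasing sequence $(N_i)_{i\geq1}$ of positive integers such that for every $i \geq 1$ there is a subset $A^{(i)} \subset \{a_1,\ldots,a_{N_i}\}$ with $|A^{(i)}| \geq C N_i$ which is contained in a $d$-dimensional arithmetic progression of size at most $K N_i$. $\{x\}$ denotes the fractional part of $x$ and $\|x\|$ the distance from $x$ to the nearest integer. A sequence $(x_n)$ in $[0,1)$ has Poissonian pair correlations if for every $s>0$, $\frac{1}{N}\#\{1 \leq i \neq j \leq N : \|x_i - x_j\| \leq s/N\} \to 2s$ as $N \to \infty$. *)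

theory Defs
  imports "HOL-Analysis.Analysis"
begin

definition dist_int :: "real \<Rightarrow> real" where
  "dist_int x = \<bar>x - round x\<bar>"

definition is_dim_AP :: "nat \<Rightarrow> real \<Rightarrow> int set \<Rightarrow> bool" where
  "is_dim_AP d S P \<longleftrightarrow>
     (\<exists>(h::int) (k::nat \<Rightarrow> int) (s::nat \<Rightarrow> nat).
        (\<forall>j<d. s j > 0) \<and> real (\<Prod>j<d. s j) \<le> S \<and>
        P = {h + (\<Sum>j<d. r j * k j) | r. \<forall>j<d. 0 \<le> r j \<and> r j < int (s j)})"

text \<open>Quasi-arithmetic of degree d (sequence indexed from 1).\<close>
definition quasi_arithmetic :: "nat \<Rightarrow> (nat \<Rightarrow> int) \<Rightarrow> bool" where
  "quasi_arithmetic d a \<longleftrightarrow>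
     (\<exists>(C::real) (K::real) (Ns::nat \<Rightarrow> nat). C > 0 \<and> K > 0 \<and>
        strict_mono Ns \<and> (\<forall>i. Ns i > 0) \<and>
        (\<forall>i. \<exists>A P. A \<subseteq> a ` {1..Ns i} \<and> real (card A) \<ge> C * real (Ns i) \<and>
              is_dim_AP d (K * real (Ns i)) P \<and> A \<subseteq> P))"

text \<open>Poissonian pair correlations (sequence indexed from 1).\<close>
definition poissonian_pc :: "(nat \<Rightarrow> real) \<Rightarrow> bool" where
  "poissonian_pc x \<longleftrightarrow>
     (\<forall>s::real. s > 0 \<longrightarrow>
        ((\<lambda>N. real (card {(i, j). i \<in> {1..N} \<and> j \<in> {1..N} \<and> i \<noteq> j \<and>
                   dist_int (x i - x j) \<le> s / real N}) / real N)
          \<longlonglongrightarrow> 2 * s))"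

end

theory Submission
  imports Defs
begin

text \<open>
  If \<open>({a\<^sub>n \<alpha>})\<close> had Poissonian pair correlations, then for fixed \<open>\<eta> > 0\<close> and large
  \<open>N\<close> only about \<open>2 \<eta> N\<close> pairs \<open>i \<noteq> j \<le> N\<close> could have their distance in a window
  of length \<open>\<eta> / N\<close>. Quasi-arithmeticity yields, for infinitely many \<open>N\<close>, a set \<open>A\<close>
  of at least \<open>C N\<close> of the first \<open>N\<close> terms inside a progression \<open>P\<close> with
  \<open>|P + P| \<le> 2\<^sup>d K N\<close>. Cutting the circle into \<open>M \<approx> \<theta> N\<close> arcs gives
  \<open>G \<subseteq> A\<close> with \<open>|G| \<ge> |A| / M\<close> whose dilates \<open>g \<alpha>\<close> are within \<open>1 / M\<close> of each
  other modulo 1, and Cauchy-Schwarz for the representation function of \<open>A + G \<subseteq> P + P\<close>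
  gives \<open>g \<noteq> g'\<close> in \<open>G\<close> such that \<open>v = g - g'\<close> is a difference of at least \<open>\<theta> N\<close>
  pairs in \<open>A\<close>. All these pairs have the same distance \<open>dist_int (v \<alpha>) \<le> 2 / (\<theta> N)\<close>,
  which is too many for the window bound with \<open>\<eta> = \<theta> / 5\<close>.
\<close>

lemma dist_int_le_abs_diff: "dist_int x \<le> \<bar>x - of_int n\<bar>"
proof (cases "\<bar>x - of_int n\<bar> < 1/2")
  case True
  then have "round x = n" by (rule round_unique')
  then show ?thesis by (simp add: dist_int_def)
next
  case False
  then show ?thesis using of_int_round_abs_le[of x] by (simp add: dist_int_def abs_minus_commute)
qed

lemma dist_int_add_of_int [simp]: "dist_int (x + of_int n) = dist_int x"
proof -
  have "round (x + of_int n) = round x + n"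
    unfolding round_def by (metis add.commute add.left_commute floor_add_int)
  then show ?thesis by (simp add: dist_int_def)
qed

lemma dist_int_frac_diff [simp]: "dist_int (frac u - frac w) = dist_int (u - w)"
proof -
  have "frac u - frac w = (u - w) + of_int (\<lfloor>w\<rfloor> - \<lfloor>u\<rfloor>)"
    by (simp add: frac_def)
  then show ?thesis by (simp only: dist_int_add_of_int)
qed

lemma exists_cluster_mod_one:
  fixes A :: "int set" and M :: nat and \<alpha> :: real
  assumes "finite A" and "M \<ge> 1"
  shows "\<exists>G\<subseteq>A. card A \<le> card G * M \<and>
           (\<forall>g\<in>G. \<forall>g'\<in>G. dist_int (of_int (g - g') * \<alpha>) \<le> 1 / M)"
proof -
  define box where "box g = nat \<lfloor>M * frac (of_int g * \<alpha>)\<rfloor>" for g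
  have "box g < M" for g
    using frac_lt_1[of "of_int g * \<alpha>"] \<open>M \<ge> 1\<close>
    by (simp add: box_def nat_less_iff floor_less_iff)
  then have "box \<in> A \<rightarrow> {..<M}" by blast
  moreover have "{..<M} \<noteq> {}" using \<open>M \<ge> 1\<close> by (simp add: lessThan_empty_iff)
  ultimately obtain t where t: "card A \<le> card (box -` {t} \<inter> A) * M"
    using pigeonhole_card[of box A "{..<M}"] \<open>finite A\<close> by auto
  have "dist_int (of_int (g - g') * \<alpha>) \<le> 1 / M" if "box g = t" "box g' = t" for g g'
  proof -
    define u w where "u = frac (of_int g * \<alpha>)" and "w = frac (of_int g' * \<alpha>)"
    have "nat \<lfloor>M * u\<rfloor> = nat \<lfloor>M * w\<rfloor>"
      using that by (simp add: box_def u_def w_def)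
    moreover have "\<lfloor>M * u\<rfloor> \<ge> 0" "\<lfloor>M * w\<rfloor> \<ge> 0"
      by (simp_all add: u_def w_def frac_ge_0)
    ultimately have "\<lfloor>M * u\<rfloor> = \<lfloor>M * w\<rfloor>"
      by (metis nat_eq_iff2)
    then have "\<bar>M * u - M * w\<bar> < 1" by linarith
    moreover have "\<bar>M * u - M * w\<bar> = M * \<bar>u - w\<bar>"
      by (simp add: abs_mult flip: right_diff_distrib)
    ultimately have "\<bar>u - w\<bar> \<le> 1 / M"
      using \<open>M \<ge> 1\<close> by (simp add: field_simps)
    moreover have "dist_int (of_int (g - g') * \<alpha>) = dist_int (u - w)"
      by (simp add: u_def w_def left_diff_distrib)
    ultimately show ?thesis using dist_int_le_abs_diff[of "u - w" 0] by simp
  qed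
  then show ?thesis using t by (intro exI[of _ "box -` {t} \<inter> A"]) auto
qed

lemma dim_AP_sumset:
  assumes "is_dim_AP d S P"
  shows "\<exists>Q. finite Q \<and> real (card Q) \<le> 2 ^ d * S \<and> (\<forall>x\<in>P. \<forall>y\<in>P. x + y \<in> Q)"
proof -
  obtain h :: int and k :: "nat \<Rightarrow> int" and s :: "nat \<Rightarrow> nat" where
    sS: "real (\<Prod>j<d. s j) \<le> S" and
    P: "P = {h + (\<Sum>j<d. r j * k j) | r. \<forall>j<d. 0 \<le> r j \<and> r j < int (s j)}"
    using assms unfolding is_dim_AP_def by blast
  define B where "B = PiE {..<d} (\<lambda>j. {0..<2 * int (s j)})"
  define Q where "Q = (\<lambda>w. 2 * h + (\<Sum>j<d. w j * k j)) ` B"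
  have "finite B" unfolding B_def by (intro finite_PiE) auto
  have "card Q \<le> card B"
    unfolding Q_def using \<open>finite B\<close> by (rule card_image_le)
  also have "card B = 2 ^ d * (\<Prod>j<d. s j)"
    by (simp add: B_def card_PiE nat_mult_distrib prod.distrib)
  finally have "real (card Q) \<le> real (2 ^ d * (\<Prod>j<d. s j))"
    by (simp only: of_nat_le_iff)
  also have "\<dots> = 2 ^ d * real (\<Prod>j<d. s j)"
    by simp
  also have "\<dots> \<le> 2 ^ d * S"
    using sS by simp
  finally have "real (card Q) \<le> 2 ^ d * S" .
  moreover have "x + y \<in> Q" if "x \<in> P" "y \<in> P" for x y
  proof -
    obtain r where r: "\<forall>j<d. 0 \<le> r j \<and> r j < int (s j)" "x = h + (\<Sum>j<d. r j * k j)"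
      using \<open>x \<in> P\<close> P by blast
    obtain r' where r': "\<forall>j<d. 0 \<le> r' j \<and> r' j < int (s j)" "y = h + (\<Sum>j<d. r' j * k j)"
      using \<open>y \<in> P\<close> P by blast
    define w where "w = restrict (\<lambda>j. r j + r' j) {..<d}"
    have "w \<in> B" using r(1) r'(1) by (force simp: w_def B_def PiE_iff)
    moreover have "x + y = 2 * h + (\<Sum>j<d. w j * k j)"
      using r(2) r'(2) by (simp add: w_def distrib_right sum.distrib)
    ultimately show ?thesis unfolding Q_def by blast
  qed
  ultimately show ?thesis using \<open>finite B\<close> unfolding Q_def by blast
qed

lemma sum_card_fibres:
  assumes "finite S" "finite T" "g ` S \<subseteq> T"
  shows "(\<Sum>y\<in>T. card {x\<in>S. g x = y}) = card S"
  using sum.group[OF assms, of "\<lambda>_. 1::nat"] by simp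

lemma sum_squared_representations:
  fixes A G S :: "int set"
  assumes fA: "finite A" and fG: "finite G" and fS: "finite S"
    and AGS: "\<And>x g. x \<in> A \<Longrightarrow> g \<in> G \<Longrightarrow> x + g \<in> S"
  shows "(\<Sum>y\<in>S. card {p \<in> A \<times> G. fst p + snd p = y} ^ 2)
       = (\<Sum>g\<in>G. \<Sum>g'\<in>G. card {x \<in> A. x + (g - g') \<in> A})"
proof -
  define R where "R y = {p \<in> A \<times> G. fst p + snd p = y}" for y
  define E where "E = {(p, q) \<in> (A \<times> G) \<times> (A \<times> G). fst p + snd p = fst q + snd q}"
  have fE: "finite E"
    by (rule finite_subset[of _ "(A \<times> G) \<times> (A \<times> G)"]) (use fA fG in \<open>auto simp: E_def\<close>)
  have "(\<Sum>y\<in>S. card (R y) ^ 2) = (\<Sum>y\<in>S. card {e \<in> E. fst (fst e) + snd (fst e) = y})"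
  proof (rule sum.cong[OF refl])
    fix y
    have "R y \<times> R y = {e \<in> E. fst (fst e) + snd (fst e) = y}"
      unfolding R_def E_def by auto
    then show "card (R y) ^ 2 = card {e \<in> E. fst (fst e) + snd (fst e) = y}"
      by (metis card_cartesian_product power2_eq_square)
  qed
  also have "\<dots> = card E"
    by (rule sum_card_fibres) (use fE fS AGS in \<open>auto simp: E_def\<close>)
  also have "\<dots> = (\<Sum>h\<in>G \<times> G. card {e \<in> E. (snd (fst e), snd (snd e)) = h})"
    by (rule sum_card_fibres[symmetric]) (use fE fG in \<open>auto simp: E_def\<close>)
  also have "\<dots> = (\<Sum>h\<in>G \<times> G. card {x \<in> A. x + (fst h - snd h) \<in> A})"
  proof (rule sum.cong[OF refl], clarify)
    fix g g' assume "g \<in> G" "g' \<in> G"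
    then have "{e \<in> E. (snd (fst e), snd (snd e)) = (g, g')}
        = (\<lambda>x. ((x, g), (x + (g - g'), g'))) ` {x \<in> A. x + (g - g') \<in> A}"
      unfolding E_def by (force simp: algebra_simps)
    moreover have "inj (\<lambda>x. ((x, g), (x + (g - g'), g')))" by (auto intro: injI)
    ultimately show "card {e \<in> E. (snd (fst e), snd (snd e)) = (g, g')}
        = card {x \<in> A. x + (fst (g, g') - snd (g, g')) \<in> A}"
      by (simp add: card_image inj_on_subset)
  qed
  also have "\<dots> = (\<Sum>g\<in>G. \<Sum>g'\<in>G. card {x \<in> A. x + (g - g') \<in> A})"
    by (simp add: sum.cartesian_product case_prod_beta)
  finally show ?thesis unfolding R_def .
qed

lemma additive_energy_lower_bound:
  fixes A G S :: "int set"
  assumes fA: "finite A" and fG: "finite G" and fS: "finite S"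
    and AGS: "\<And>x g. x \<in> A \<Longrightarrow> g \<in> G \<Longrightarrow> x + g \<in> S"
  shows "(real (card A) * real (card G)) ^ 2
       \<le> real (card S) * (\<Sum>g\<in>G. \<Sum>g'\<in>G. real (card {x \<in> A. x + (g - g') \<in> A}))"
proof -
  define r where "r y = real (card {p \<in> A \<times> G. fst p + snd p = y})" for y
  have "(\<Sum>y\<in>S. card {p \<in> A \<times> G. fst p + snd p = y}) = card (A \<times> G)"
    by (rule sum_card_fibres) (use fA fG fS AGS in auto)
  then have "(\<Sum>y\<in>S. r y) = real (card A) * real (card G)"
    unfolding r_def by (simp add: card_cartesian_product flip: of_nat_sum)
  moreover have "(\<Sum>y\<in>S. r y ^ 2) = (\<Sum>g\<in>G. \<Sum>g'\<in>G. real (card {x \<in> A. x + (g - g') \<in> A}))"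
    using sum_squared_representations[OF fA fG fS AGS] unfolding r_def
    by (metis (mono_tags, lifting) of_nat_power of_nat_sum sum.cong)
  ultimately show ?thesis
    using sum_squared_le_sum_of_squares[of r S] by (simp add: mult.commute)
qed

lemma exists_popular_difference:
  fixes A G S :: "int set"
  assumes fA: "finite A" and GA: "G \<subseteq> A" and Gne: "G \<noteq> {}" and fS: "finite S"
    and AGS: "\<And>x g. x \<in> A \<Longrightarrow> g \<in> G \<Longrightarrow> x + g \<in> S"
    and X_def: "X = real (card A) ^ 2 / real (card S) - real (card A) / real (card G)"
    and Xpos: "0 < X"
  shows "\<exists>g\<in>G. \<exists>g'\<in>G. g \<noteq> g' \<and> X \<le> real (card {x \<in> A. x + (g - g') \<in> A})"
proof (rule ccontr)
  assume "\<not> ?thesis"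
  then have small: "real (card {x \<in> A. x + (g - g') \<in> A}) \<le> X"
    if "g \<in> G" "g' \<in> G" "g \<noteq> g'" for g g'
    using that by force
  define T where "T = (\<Sum>g\<in>G. \<Sum>g'\<in>G. real (card {x \<in> A. x + (g - g') \<in> A}))"
  have fG: "finite G" using fA GA finite_subset by blast
  have card_G: "real (card (G - {g})) = real (card G) - 1" if "g \<in> G" for g
  proof -
    have "card G \<ge> 1" using that fG by (metis One_nat_def Suc_leI card_gt_0_iff empty_iff)
    then show ?thesis using that fG by (simp add: card_Diff_singleton of_nat_diff)
  qed
  txt \<open>The diagonal terms contribute \<open>|A|\<close> each, the others at most \<open>X\<close>.\<close>
  have "T \<le> (\<Sum>g\<in>G. real (card A) + (real (card G) - 1) * X)"
    unfolding T_def
  proof (rule sum_mono)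
    fix g assume g: "g \<in> G"
    have "(\<Sum>g'\<in>G. real (card {x \<in> A. x + (g - g') \<in> A}))
        = real (card A) + (\<Sum>g'\<in>G - {g}. real (card {x \<in> A. x + (g - g') \<in> A}))"
      using fG g by (simp add: sum.remove)
    also have "\<dots> \<le> real (card A) + real (card (G - {g})) * X"
      by (intro add_left_mono sum_bounded_above) (use small g in auto)
    finally show "(\<Sum>g'\<in>G. real (card {x \<in> A. x + (g - g') \<in> A})) \<le> real (card A) + (real (card G) - 1) * X"
      using card_G[OF g] by simp
  qed
  then have T_le: "T \<le> real (card G) * (real (card A) + (real (card G) - 1) * X)"
    by simp
  define a n s where "a = real (card A)" and "n = real (card G)" and "s = real (card S)"
  have n: "n > 0" unfolding n_def using fG Gne by (simp add: card_gt_0_iff)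
  have "s > 0"
  proof -
    obtain g where "g \<in> G" using Gne by blast
    then have "g + g \<in> S" using AGS GA by blast
    then show ?thesis unfolding s_def using fS by (auto simp: card_gt_0_iff)
  qed
  have sX: "s * X = a ^ 2 - s * a / n"
    using \<open>s > 0\<close> unfolding X_def a_def n_def s_def by (simp add: field_simps)
  have "(a * n) ^ 2 \<le> T * s"
    using additive_energy_lower_bound[OF fA fG fS AGS]
    unfolding a_def n_def s_def T_def by (simp add: mult.commute)
  also have "\<dots> \<le> n * (a + (n - 1) * X) * s"
    using T_le \<open>s > 0\<close> unfolding a_def n_def by (intro mult_right_mono) auto
  also have "\<dots> = n * (s * a + (n - 1) * (s * X))"
    by (simp add: algebra_simps)
  also have "\<dots> = s * a + n * (n - 1) * a ^ 2"
    unfolding sX using n by (simp add: field_simps)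
  finally have "n * a ^ 2 \<le> s * a"
    by (simp add: algebra_simps power2_eq_square)
  moreover have "s * a < n * a ^ 2"
    using Xpos n \<open>s > 0\<close> unfolding X_def a_def n_def s_def
    by (simp add: field_simps power2_eq_square)
  ultimately show False by linarith
qed

lemma dim_AP_subset_recurrent_difference:
  fixes A P :: "int set" and M :: nat and \<alpha> S :: real
  assumes AP: "is_dim_AP d S P" and "finite A" and "A \<subseteq> P" and "M \<ge> 1"
    and M_small: "M < real (card A) ^ 2 / (2 ^ d * S)"
  shows "\<exists>v. v \<noteq> 0 \<and> dist_int (of_int v * \<alpha>) \<le> 1 / M \<and>
           real (card A) ^ 2 / (2 ^ d * S) - M \<le> real (card {x \<in> A. x + v \<in> A})"
proof -
  obtain G where "G \<subseteq> A" and cluster: "card A \<le> card G * M"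
    and close: "\<forall>g\<in>G. \<forall>g'\<in>G. dist_int (of_int (g - g') * \<alpha>) \<le> 1 / M"
    using exists_cluster_mod_one[OF \<open>finite A\<close> \<open>M \<ge> 1\<close>] by blast
  obtain Q where "finite Q" and card_Q: "real (card Q) \<le> 2 ^ d * S"
    and PPQ: "\<forall>x\<in>P. \<forall>y\<in>P. x + y \<in> Q"
    using dim_AP_sumset[OF AP] by blast
  have AGQ: "x + g \<in> Q" if "x \<in> A" "g \<in> G" for x g
    using that PPQ \<open>A \<subseteq> P\<close> \<open>G \<subseteq> A\<close> by blast
  have "real (card A) ^ 2 / (2 ^ d * S) > 0"
    using M_small \<open>M \<ge> 1\<close> by linarith
  then have "2 ^ d * S > 0" and "card A > 0"
    by (auto simp: zero_less_divide_iff)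
  then have "card G > 0" using cluster by (metis gr0I le_zero_eq mult_is_0)
  then have "G \<noteq> {}" by auto
  then have "Q \<noteq> {}" using AGQ \<open>G \<subseteq> A\<close> by blast
  then have "card Q > 0" using \<open>finite Q\<close> by (simp add: card_gt_0_iff)
  have "real (card A) ^ 2 / (2 ^ d * S) \<le> real (card A) ^ 2 / real (card Q)"
    using card_Q \<open>card Q > 0\<close> by (intro divide_left_mono) auto
  moreover have "real (card A) / real (card G) \<le> M"
    using cluster \<open>card G > 0\<close> by (simp add: divide_le_eq mult.commute flip: of_nat_mult)
  ultimately have X: "real (card A) ^ 2 / (2 ^ d * S) - M
      \<le> real (card A) ^ 2 / real (card Q) - real (card A) / real (card G)"
    by linarith
  obtain g g' where "g \<in> G" "g' \<in> G" "g \<noteq> g'"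
    and popular: "real (card A) ^ 2 / real (card Q) - real (card A) / real (card G)
                    \<le> real (card {x \<in> A. x + (g - g') \<in> A})"
    using exists_popular_difference[OF \<open>finite A\<close> \<open>G \<subseteq> A\<close> \<open>G \<noteq> {}\<close> \<open>finite Q\<close> AGQ refl]
      X M_small by fastforce
  show ?thesis
    using popular X close \<open>g \<in> G\<close> \<open>g' \<in> G\<close> \<open>g \<noteq> g'\<close>
    by (intro exI[of _ "g - g'"]) auto
qed

lemma dense_subset_recurrent_difference:
  fixes A P :: "int set" and C K \<theta> \<alpha> :: real and N :: nat
  assumes AP: "is_dim_AP d (K * N) P" and "finite A" and "A \<subseteq> P"
    and card_A: "C * N \<le> card A" and "C \<ge> 0" and "K > 0"
    and "\<theta> \<le> C ^ 2 / (2 ^ (d + 1) * K)" and "\<theta> * N \<ge> 1"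
  shows "\<exists>v. v \<noteq> 0 \<and> dist_int (of_int v * \<alpha>) \<le> 2 / (\<theta> * N) \<and>
           \<theta> * N \<le> real (card {x \<in> A. x + v \<in> A})"
proof -
  define M where "M = nat \<lfloor>\<theta> * N\<rfloor>"
  have "1 \<le> \<lfloor>\<theta> * N\<rfloor>" using \<open>\<theta> * N \<ge> 1\<close> by (simp add: le_floor_iff)
  then have "real M = of_int \<lfloor>\<theta> * N\<rfloor>" by (simp add: M_def)
  then have "M \<ge> 1" and M_le: "M \<le> \<theta> * N" and M_ge: "M \<ge> \<theta> * N / 2"
    using \<open>1 \<le> \<lfloor>\<theta> * N\<rfloor>\<close> of_int_floor_le[of "\<theta> * N"]
      real_of_int_floor_add_one_gt[of "\<theta> * N"] by linarith+
  have "N > 0" using \<open>\<theta> * N \<ge> 1\<close> by (cases N) auto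
  have "2 * (\<theta> * N) \<le> 2 * (C ^ 2 / (2 ^ (d + 1) * K) * N)"
    using \<open>\<theta> \<le> C ^ 2 / (2 ^ (d + 1) * K)\<close> by (intro mult_left_mono mult_right_mono) auto
  also have "\<dots> = (C * N) ^ 2 / (2 ^ d * (K * N))"
    using \<open>K > 0\<close> \<open>N > 0\<close> by (simp add: field_simps power2_eq_square)
  also have "\<dots> \<le> real (card A) ^ 2 / (2 ^ d * (K * N))"
    using card_A \<open>C \<ge> 0\<close> \<open>K > 0\<close> by (intro divide_right_mono power_mono) auto
  finally have energy: "2 * (\<theta> * N) \<le> real (card A) ^ 2 / (2 ^ d * (K * N))" .
  obtain v where "v \<noteq> 0" and dist_v: "dist_int (of_int v * \<alpha>) \<le> 1 / M"
    and count_v: "real (card A) ^ 2 / (2 ^ d * (K * N)) - M \<le> real (card {x \<in> A. x + v \<in> A})"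
    using dim_AP_subset_recurrent_difference[OF AP \<open>finite A\<close> \<open>A \<subseteq> P\<close> \<open>M \<ge> 1\<close>, of \<alpha>]
      energy M_le \<open>\<theta> * N \<ge> 1\<close> by fastforce
  have "1 / real M \<le> 2 / (\<theta> * N)"
    using M_ge \<open>M \<ge> 1\<close> \<open>\<theta> * N \<ge> 1\<close> by (simp add: field_simps)
  moreover have "\<theta> * N \<le> real (card {x \<in> A. x + v \<in> A})"
    using count_v energy M_le by linarith
  ultimately show ?thesis
    using \<open>v \<noteq> 0\<close> dist_v by (meson order_trans)
qed

lemma quasi_arithmetic_frequently_recurrent_difference:
  fixes a :: "nat \<Rightarrow> int" and \<alpha> :: real
  assumes "quasi_arithmetic d a"
  shows "\<exists>\<theta>::real. \<theta> > 0 \<and> (\<exists>\<^sub>F N in sequentially. \<exists>v. v \<noteq> 0 \<and>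
           dist_int (of_int v * \<alpha>) \<le> 2 / (\<theta> * N) \<and>
           \<theta> * N \<le> real (card {x \<in> a ` {1..N}. x + v \<in> a ` {1..N}}))"
proof -
  obtain C K :: real and Ns :: "nat \<Rightarrow> nat" where "C > 0" "K > 0" "strict_mono Ns"
    and dense: "\<forall>i. \<exists>A P. A \<subseteq> a ` {1..Ns i} \<and> real (card A) \<ge> C * real (Ns i) \<and>
              is_dim_AP d (K * real (Ns i)) P \<and> A \<subseteq> P"
    using assms unfolding quasi_arithmetic_def by blast
  define \<theta> where "\<theta> = C ^ 2 / (2 ^ (d + 1) * K)"
  have "\<theta> > 0" unfolding \<theta>_def using \<open>C > 0\<close> \<open>K > 0\<close> by simp
  have "\<exists>N\<ge>N0. \<exists>v. v \<noteq> 0 \<and> dist_int (of_int v * \<alpha>) \<le> 2 / (\<theta> * N) \<and>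
           \<theta> * N \<le> real (card {x \<in> a ` {1..N}. x + v \<in> a ` {1..N}})" for N0
  proof -
    define N where "N = Ns (N0 + nat \<lceil>1 / \<theta>\<rceil>)"
    have "N \<ge> N0 + nat \<lceil>1 / \<theta>\<rceil>" unfolding N_def using seq_suble[OF \<open>strict_mono Ns\<close>] by simp
    have "1 / \<theta> \<le> real (nat \<lceil>1 / \<theta>\<rceil>)" by (rule real_nat_ceiling_ge)
    also have "\<dots> \<le> N" using \<open>N \<ge> N0 + nat \<lceil>1 / \<theta>\<rceil>\<close> by (intro of_nat_mono) linarith
    finally have "\<theta> * N \<ge> 1" using \<open>\<theta> > 0\<close> by (simp add: field_simps)
    obtain A P where "A \<subseteq> a ` {1..N}" and "C * N \<le> card A" and "is_dim_AP d (K * N) P" and "A \<subseteq> P"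
      using dense unfolding N_def by blast
    moreover have "finite A" using \<open>A \<subseteq> a ` {1..N}\<close> finite_surj by blast
    ultimately obtain v where "v \<noteq> 0" "dist_int (of_int v * \<alpha>) \<le> 2 / (\<theta> * N)"
      and "\<theta> * N \<le> real (card {x \<in> A. x + v \<in> A})"
      using dense_subset_recurrent_difference[of d K N P A C \<theta> \<alpha>] \<open>C > 0\<close> \<open>K > 0\<close> \<open>\<theta> * N \<ge> 1\<close>
      unfolding \<theta>_def by auto
    moreover have "card {x \<in> A. x + v \<in> A} \<le> card {x \<in> a ` {1..N}. x + v \<in> a ` {1..N}}"
      using \<open>A \<subseteq> a ` {1..N}\<close> by (intro card_mono) auto
    ultimately show ?thesis
      using \<open>N \<ge> N0 + nat \<lceil>1 / \<theta>\<rceil>\<close> by (intro exI[of _ N] conjI exI[of _ v]) auto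
  qed
  then show ?thesis
    using \<open>\<theta> > 0\<close> unfolding frequently_sequentially by blast
qed

definition close_pairs :: "(nat \<Rightarrow> real) \<Rightarrow> nat \<Rightarrow> real \<Rightarrow> (nat \<times> nat) set" where
  "close_pairs x N r = {(i, j). i \<in> {1..N} \<and> j \<in> {1..N} \<and> i \<noteq> j \<and> dist_int (x i - x j) \<le> r}"

lemma finite_close_pairs: "finite (close_pairs x N r)"
  by (rule finite_subset[of _ "{1..N} \<times> {1..N}"]) (auto simp: close_pairs_def)

lemma close_pairs_mono: "r \<le> r' \<Longrightarrow> close_pairs x N r \<subseteq> close_pairs x N r'"
  by (auto simp: close_pairs_def)

lemma card_close_pairs_Diff:
  assumes "r \<le> r'"
  shows "real (card (close_pairs x N r' - close_pairs x N r))
       = real (card (close_pairs x N r')) - real (card (close_pairs x N r))"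
  using assms by (simp add: card_Diff_subset finite_close_pairs close_pairs_mono card_mono of_nat_diff)

lemma poissonian_pc_close_pairs:
  "poissonian_pc x \<longleftrightarrow>
     (\<forall>s>0. (\<lambda>N. real (card (close_pairs x N (s / N))) / N) \<longlonglongrightarrow> 2 * s)"
  by (simp add: poissonian_pc_def close_pairs_def)

lemma card_close_pairs_window_from_grid:
  fixes \<eta> \<epsilon> s :: real
  assumes "N > 0" and "\<eta> > 0" and "s \<ge> 0"
    and grid: "\<And>t::nat. (1::nat) \<le> t \<Longrightarrow> t * \<eta> \<le> s + \<eta> \<Longrightarrow>
                 \<bar>real (card (close_pairs x N (t * \<eta> / N))) - 2 * (t * \<eta>) * N\<bar> < \<epsilon> * N"
  shows "real (card (close_pairs x N (s / N) - close_pairs x N ((s - \<eta>) / N))) < (4 * \<eta> + 2 * \<epsilon>) * N"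
proof -
  txt \<open>The window \<open>(s - \<eta>, s]\<close> lies in the grid window \<open>((t - 2) \<eta>, t \<eta>]\<close>.\<close>
  define t where "t = max 1 (nat \<lceil>s / \<eta>\<rceil>)"
  have "t \<ge> 1" unfolding t_def by simp
  have "s / \<eta> \<le> t" unfolding t_def by linarith
  then have "s \<le> t * \<eta>" using \<open>\<eta> > 0\<close> by (simp add: divide_le_eq)
  have "real t \<le> s / \<eta> + 1" unfolding t_def using \<open>s \<ge> 0\<close> \<open>\<eta> > 0\<close> by (auto simp: max_def)
  then have "t * \<eta> \<le> s + \<eta>" using \<open>\<eta> > 0\<close> by (simp add: field_simps)
  define upper lower where
    "upper = close_pairs x N (t * \<eta> / N)" and "lower = close_pairs x N ((real t - 2) * \<eta> / N)"
  have "real (card upper) < (2 * (t * \<eta>) + \<epsilon>) * N"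
    using grid[OF \<open>t \<ge> 1\<close> \<open>t * \<eta> \<le> s + \<eta>\<close>] unfolding upper_def by (simp add: algebra_simps)
  moreover have "(2 * ((real t - 2) * \<eta>) - \<epsilon>) * N < real (card lower)"
  proof (cases "t \<ge> 3")
    case True
    then have "t - 2 \<ge> 1" "real (t - 2) = real t - 2" by auto
    moreover have "real (t - 2) * \<eta> \<le> s + \<eta>"
      using \<open>t * \<eta> \<le> s + \<eta>\<close> \<open>\<eta> > 0\<close> True by (simp add: of_nat_diff algebra_simps)
    ultimately show ?thesis
      using grid[of "t - 2"] unfolding lower_def by (simp add: algebra_simps)
  next
    case False
    then have "real t - 2 \<le> 0" by simp
    then have "(real t - 2) * \<eta> * N \<le> 0"
      using \<open>\<eta> > 0\<close> by (intro mult_nonpos_nonneg) auto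
    moreover have "\<epsilon> * N > 0"
      using grid[OF \<open>t \<ge> 1\<close> \<open>t * \<eta> \<le> s + \<eta>\<close>] by linarith
    ultimately show ?thesis by (simp add: algebra_simps)
  qed
  moreover have "close_pairs x N (s / N) - close_pairs x N ((s - \<eta>) / N) \<subseteq> upper - lower"
    unfolding upper_def lower_def using \<open>s \<le> t * \<eta>\<close> \<open>t * \<eta> \<le> s + \<eta>\<close> \<open>N > 0\<close>
    by (intro Diff_mono close_pairs_mono divide_right_mono) (auto simp: algebra_simps)
  then have "card (close_pairs x N (s / N) - close_pairs x N ((s - \<eta>) / N)) \<le> card (upper - lower)"
    by (intro card_mono) (simp_all add: upper_def finite_close_pairs)
  moreover have "real (card (upper - lower)) = real (card upper) - real (card lower)"
    unfolding upper_def lower_def using \<open>\<eta> > 0\<close> \<open>N > 0\<close>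
    by (intro card_close_pairs_Diff divide_right_mono) auto
  ultimately show ?thesis
    by (simp add: algebra_simps)
qed

lemma poissonian_pc_eventually_close_pairs_grid:
  fixes \<eta> \<epsilon> :: real and m :: nat
  assumes "poissonian_pc x" and "\<eta> > 0" and "\<epsilon> > 0"
  shows "\<forall>\<^sub>F N in sequentially. \<forall>t\<in>{1..m}.
           \<bar>real (card (close_pairs x N (t * \<eta> / N))) - 2 * (t * \<eta>) * N\<bar> < \<epsilon> * N"
proof (rule eventually_ball_finite[OF finite_atLeastAtMost], rule ballI)
  fix t assume "t \<in> {1..m}"
  then have "(\<lambda>N. real (card (close_pairs x N (t * \<eta> / N))) / N) \<longlonglongrightarrow> 2 * (t * \<eta>)"
    using assms by (simp add: poissonian_pc_close_pairs)
  from tendstoD[OF this \<open>\<epsilon> > 0\<close>] eventually_gt_at_top[of 0]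
  show "\<forall>\<^sub>F N in sequentially.
      \<bar>real (card (close_pairs x N (t * \<eta> / N))) - 2 * (t * \<eta>) * N\<bar> < \<epsilon> * N"
  proof eventually_elim
    case (elim N)
    have "\<bar>real (card (close_pairs x N (t * \<eta> / N))) - 2 * (t * \<eta>) * N\<bar>
        = \<bar>(real (card (close_pairs x N (t * \<eta> / N))) / N - 2 * (t * \<eta>)) * N\<bar>"
      using elim by (simp add: left_diff_distrib)
    also have "\<dots> = \<bar>real (card (close_pairs x N (t * \<eta> / N))) / N - 2 * (t * \<eta>)\<bar> * N"
      by (simp add: abs_mult)
    also have "\<dots> < \<epsilon> * N"
      using elim by (intro mult_strict_right_mono) (auto simp: dist_real_def)
    finally show ?case .
  qed
qed

lemma poissonian_pc_few_pairs_in_window: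
  fixes \<eta> L :: real
  assumes "poissonian_pc x" and "\<eta> > 0"
  shows "\<forall>\<^sub>F N in sequentially. \<forall>s\<in>{0..L}.
           real (card (close_pairs x N (s / N) - close_pairs x N ((s - \<eta>) / N))) < 5 * \<eta> * N"
proof -
  define m where "m = nat \<lceil>L / \<eta>\<rceil> + 1"
  have "\<forall>\<^sub>F N in sequentially. N \<ge> 1"
    by (rule eventually_ge_at_top)
  with poissonian_pc_eventually_close_pairs_grid[OF assms half_gt_zero[OF \<open>\<eta> > 0\<close>], of m]
  show ?thesis
  proof eventually_elim
    case (elim N)
    show ?case
    proof
      fix s assume s: "s \<in> {0..L}"
      have "t \<in> {1..m}" if "t \<ge> 1" "t * \<eta> \<le> s + \<eta>" for t :: nat
      proof -
        have "real t \<le> L / \<eta> + 1"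
          using that s \<open>\<eta> > 0\<close> by (simp add: field_simps)
        then have "real t \<le> real m"
          unfolding m_def using real_nat_ceiling_ge[of "L / \<eta>"] by simp
        then show ?thesis using \<open>t \<ge> 1\<close> by simp
      qed
      with card_close_pairs_window_from_grid[OF _ \<open>\<eta> > 0\<close>, of N s x "\<eta> / 2"] elim s
      show "real (card (close_pairs x N (s / N) - close_pairs x N ((s - \<eta>) / N))) < 5 * \<eta> * N"
        by auto
    qed
  qed
qed

lemma card_pairs_with_difference:
  fixes a :: "nat \<Rightarrow> int"
  assumes "inj_on a I"
  shows "card {(i, j). i \<in> I \<and> j \<in> I \<and> a i = a j + v} = card {x \<in> a ` I. x + v \<in> a ` I}"
proof -
  have "{x \<in> a ` I. x + v \<in> a ` I} = (\<lambda>(i, j). a j) ` {(i, j). i \<in> I \<and> j \<in> I \<and> a i = a j + v}"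
    by force
  moreover have "inj_on (\<lambda>(i, j). a j) {(i, j). i \<in> I \<and> j \<in> I \<and> a i = a j + v}"
    using assms by (auto simp: inj_on_def)
  ultimately show ?thesis by (simp add: card_image)
qed

lemma pairs_with_difference_subset_close_pairs:
  fixes a :: "nat \<Rightarrow> int" and \<alpha> r :: real
  defines "x \<equiv> \<lambda>n. frac (of_int (a n) * \<alpha>)"
  assumes "v \<noteq> 0" and "r < dist_int (of_int v * \<alpha>)"
  shows "{(i, j). i \<in> {1..N} \<and> j \<in> {1..N} \<and> a i = a j + v}
           \<subseteq> close_pairs x N (dist_int (of_int v * \<alpha>)) - close_pairs x N r"
proof clarify
  fix i j assume "i \<in> {1..N}" "j \<in> {1..N}" "a i = a j + v"
  moreover have "dist_int (x i - x j) = dist_int (of_int v * \<alpha>)"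
    using \<open>a i = a j + v\<close> by (simp add: x_def algebra_simps)
  ultimately show "(i, j) \<in> close_pairs x N (dist_int (of_int v * \<alpha>)) - close_pairs x N r"
    using assms(2,3) by (auto simp: close_pairs_def)
qed

theorem proposition2:
  fixes a :: "nat \<Rightarrow> int" and d :: nat
  assumes "d \<ge> 1"
    and "strict_mono_on {1..} a"
    and "\<forall>n\<ge>1. a n > 0"
    and "quasi_arithmetic d a"
  shows "\<not> (\<exists>\<alpha>::real. poissonian_pc (\<lambda>n. frac (real_of_int (a n) * \<alpha>)))"
proof
  assume "\<exists>\<alpha>::real. poissonian_pc (\<lambda>n. frac (real_of_int (a n) * \<alpha>))"
  then obtain \<alpha> :: real and x where pc: "poissonian_pc x"
    and x: "x = (\<lambda>n. frac (real_of_int (a n) * \<alpha>))" by blast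
  obtain \<theta> :: real where "\<theta> > 0" and recurrent: "\<exists>\<^sub>F N in sequentially. \<exists>v. v \<noteq> 0 \<and>
      dist_int (of_int v * \<alpha>) \<le> 2 / (\<theta> * N) \<and>
      \<theta> * N \<le> real (card {y \<in> a ` {1..N}. y + v \<in> a ` {1..N}})"
    using quasi_arithmetic_frequently_recurrent_difference[OF assms(4)] by blast
  define window where
    "window N s = close_pairs x N (s / N) - close_pairs x N ((s - \<theta> / 5) / N)" for N s
  have "\<forall>\<^sub>F N in sequentially. \<forall>s\<in>{0..2 / \<theta>}. real (card (window N s)) < \<theta> * N"
    using poissonian_pc_few_pairs_in_window[OF pc, of "\<theta> / 5" "2 / \<theta>"] \<open>\<theta> > 0\<close>
    by (simp add: window_def)
  from frequently_ex[OF frequently_eventually_conj[OF recurrent this]]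
  obtain N v where few: "\<forall>s\<in>{0..2 / \<theta>}. real (card (window N s)) < \<theta> * N" and "v \<noteq> 0"
    and dist_v: "dist_int (of_int v * \<alpha>) \<le> 2 / (\<theta> * N)"
    and many: "\<theta> * N \<le> real (card {y \<in> a ` {1..N}. y + v \<in> a ` {1..N}})"
    by blast
  define pairs where "pairs = {(i, j). i \<in> {1..N} \<and> j \<in> {1..N} \<and> a i = a j + v}"
  define s where "s = N * dist_int (of_int v * \<alpha>)"
  have "N > 0"
    using few[rule_format, of 0] \<open>\<theta> > 0\<close> by (cases "N = 0") auto
  then have "s \<in> {0..2 / \<theta>}"
    using dist_v \<open>\<theta> > 0\<close> by (auto simp: s_def dist_int_def field_simps)
  have "inj_on a {1..N}"
    using strict_mono_on_imp_inj_on[OF assms(2)] by (rule inj_on_subset) auto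
  then have "\<theta> * N \<le> real (card pairs)"
    using many unfolding pairs_def by (simp only: card_pairs_with_difference)
  also have "\<dots> \<le> real (card (window N s))"
    using pairs_with_difference_subset_close_pairs[where a = a and \<alpha> = \<alpha> and N = N
        and r = "(s - \<theta> / 5) / N", OF \<open>v \<noteq> 0\<close>]
      \<open>N > 0\<close> \<open>\<theta> > 0\<close>
    by (intro of_nat_mono card_mono) (auto simp: window_def pairs_def x s_def finite_close_pairs field_simps)
  finally show False
    using few \<open>s \<in> {0..2 / \<theta>}\<close> by fastforce
qed

end
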